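(* Let $\Omega\subset\mathbb{R}^d$ be a bounded open set with $\partial\Omega\in C^{1,1}$, and let $\delta:\mathbb{R}^d\to[0,\infty)$ with $\delta\in W^{1,\infty}(\Omega)$ satisfy $c\,\delta\le d_\Omega\le C\,\delta$ for some constants $c,C>0$. Then $\delta^s\in H^s(\mathbb{R}^d)$ for all $s\in(0,1)$.
   Context: $d_\Omega(x)=\mathrm{dist}(x,\mathbb{R}^d\setminus\Omega)$ (so the comparability forces $\delta=0$ outside $\Omega$). $W^{1,\infty}(\Omega)$ denotes Lipschitz functions on $\overline\Omega$. $H^s(\mathbb{R}^d)=\{w\in L^2(\mathbb{R}^d):\iint_{\mathbb{R}^d\times\mathbb{R}^d}\frac{|w(x)-w(y)|^2}{|x-y|^{d+2s}}dx\,dy<\infty\}$. *)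

theory Defs
  imports "HOL-Analysis.Analysis"
begin

definition dist_compl :: "'a::euclidean_space set \<Rightarrow> 'a \<Rightarrow> real" where
  "dist_compl \<Omega> x = infdist x (- \<Omega>)"

text \<open>C^{1,1} boundary: near every boundary point x0, after choosing a unit
  normal direction nu (a rotation of coordinates), Omega is the strict
  supergraph over the hyperplane orthogonal to nu of a C^1 function gamma with
  Lipschitz gradient. gamma is taken on the whole space and evaluated at the
  orthogonal projection onto the hyperplane.\<close>
definition C11_boundary :: "'a::euclidean_space set \<Rightarrow> bool" where
  "C11_boundary \<Omega> \<longleftrightarrow>
    (\<forall>x0\<in>frontier \<Omega>. \<exists>r>0. \<exists>\<nu>::'a. \<exists>\<gamma>::'a \<Rightarrow> real. \<exists>g::'a \<Rightarrow> 'a. \<exists>L::real.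
       norm \<nu> = 1 \<and>
       (\<forall>y. (\<gamma> has_derivative (\<lambda>h. g y \<bullet> h)) (at y)) \<and>
       (\<forall>y z. dist (g y) (g z) \<le> L * dist y z) \<and>
       \<Omega> \<inter> ball x0 r = {x \<in> ball x0 r. x \<bullet> \<nu> > \<gamma> (x - (x \<bullet> \<nu>) *\<^sub>R \<nu>)})"

definition Hs :: "real \<Rightarrow> ('a::euclidean_space \<Rightarrow> real) set" where
  "Hs s = {w. w \<in> borel_measurable lborel \<and>
              integrable lborel (\<lambda>x. (w x)\<^sup>2) \<and>
              (\<integral>\<^sup>+ z. ennreal ((w (fst z) - w (snd z))\<^sup>2 /
                   norm (fst z - snd z) powr (real DIM('a) + 2 * s))
                 \<partial>(lborel \<Otimes>\<^sub>M lborel)) < \<infinity>}"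

end

theory Submission
  imports Defs
begin

(*
  For x in Omega let r = d_Omega(x) / 2. On the ball B(x, r) the function delta stays above
  r / C, so t \<mapsto> t^s is Lipschitz there with constant of order r^(s-1), and the Gagliardo
  integrand is at most L^2 (r / C)^(2s-2) |x - y|^(2-d-2s). Outside the ball, at the points y
  with delta(y) \<le> delta(x), it is at most delta(x)^(2s) |x - y|^(-d-2s). Summing over dyadic
  annuli, the two pieces integrate to multiples of (r / C)^(2s-2) r^(2-2s) = C^(2-2s) and of
  (delta(x) / r)^(2s) \<le> (2 / c)^(2s), bounds independent of x. Since the kernel is symmetric,
  it suffices to integrate over x in Omega, and Omega has finite measure.
*)

lemma ex_power_of_two_bracket:
  fixes t :: real
  assumes "1 \<le> t"
  shows "\<exists>n::nat. 2 ^ n \<le> t \<and> t < 2 ^ Suc n"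
proof -
  define n where "n = nat \<lfloor>log 2 t\<rfloor>"
  have "\<lfloor>log 2 t\<rfloor> = int n"
    using assms by (simp add: n_def)
  then have "2 powr real n \<le> t \<and> t < 2 powr (real n + 1)"
    using assms floor_log_eq_powr_iff[of t 2 "int n"] by simp
  moreover have "2 powr (real n + 1) = 2 ^ Suc n"
    by (simp add: powr_add powr_realpow)
  ultimately show ?thesis
    by (metis powr_realpow zero_less_numeral)
qed

lemma power_powr:
  fixes x e :: real
  assumes "x > 0"
  shows "(x ^ n) powr e = (x powr e) ^ n"
proof -
  have "(x ^ n) powr e = (x powr real n) powr e"
    using assms by (simp add: powr_realpow)
  also have "\<dots> = (x powr e) powr real n"
    by (rule powr_powr_swap)
  also have "\<dots> = (x powr e) ^ n"
    using assms by (simp add: powr_realpow)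
  finally show ?thesis .
qed

lemma abs_powr_diff_le:
  fixes a b m s :: real
  assumes "0 < m" "m \<le> a" "m \<le> b" "0 \<le> s" "s \<le> 1"
  shows "\<bar>a powr s - b powr s\<bar> \<le> \<bar>a - b\<bar> * m powr (s - 1)"
proof -
  have *: "x powr s - y powr s \<le> (x - y) * m powr (s - 1)" if "m \<le> y" "y \<le> x" for x y
  proof -
    have pos: "0 < y" "0 < x" using that assms by auto
    have "x powr s = x * x powr (s - 1)" using pos by (simp add: powr_diff)
    also have "\<dots> \<le> x * y powr (s - 1)"
      using pos that assms by (intro mult_left_mono powr_mono2') auto
    finally have "x powr s - y powr s \<le> (x - y) * y powr (s - 1)"
      using pos by (simp add: powr_diff field_simps)
    also have "\<dots> \<le> (x - y) * m powr (s - 1)"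
      using pos that assms by (intro mult_left_mono powr_mono2') auto
    finally show ?thesis .
  qed
  show ?thesis
  proof (cases "b \<le> a")
    case True
    then show ?thesis using *[OF assms(3) True] assms by (simp add: powr_mono2)
  next
    case False
    then show ?thesis using *[OF assms(2), of b] assms by (simp add: powr_mono2)
  qed
qed

section \<open>Integrals of powers of the distance over balls and their complements\<close>

lemma set_nn_integral_le_cmult:
  fixes f g :: "'a \<Rightarrow> real"
  assumes [measurable]: "S \<in> sets M" "g \<in> borel_measurable M"
    and "0 \<le> A" and "\<And>y. y \<in> S \<Longrightarrow> f y \<le> A * g y"
  shows "(\<integral>\<^sup>+y \<in> S. ennreal (f y) \<partial>M) \<le> ennreal A * (\<integral>\<^sup>+y \<in> S. ennreal (g y) \<partial>M)"
proof -
  have "(\<integral>\<^sup>+y \<in> S. ennreal (f y) \<partial>M) \<le> (\<integral>\<^sup>+y. ennreal A * (ennreal (g y) * indicator S y) \<partial>M)"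
    using assms by (intro nn_integral_mono)
      (auto simp: ennreal_mult'[symmetric] split: split_indicator intro: ennreal_leI)
  also have "\<dots> = ennreal A * (\<integral>\<^sup>+y \<in> S. ennreal (g y) \<partial>M)"
    by (rule nn_integral_cmult) measurable
  finally show ?thesis .
qed

lemma nn_integral_annulus_dist_powr_le:
  fixes x :: "'a::euclidean_space" and t b :: real
  assumes "t > 0"
  shows "(\<integral>\<^sup>+y \<in> cball x (2 * t) - ball x t. ennreal (dist x y powr b) \<partial>lborel)
    \<le> ennreal (2 powr \<bar>b\<bar> * 2 ^ DIM('a) * unit_ball_vol DIM('a) * t powr (b + DIM('a)))"
proof -
  have "dist x y powr b \<le> 2 powr \<bar>b\<bar> * t powr b" if "t \<le> dist x y" "dist x y \<le> 2 * t" for y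
  proof (cases "b \<ge> 0")
    case True
    then have "dist x y powr b \<le> (2 * t) powr b" using that assms by (intro powr_mono2) auto
    then show ?thesis using True assms by (simp add: powr_mult)
  next
    case False
    then have "dist x y powr b \<le> t powr b" using that assms by (intro powr_mono2') auto
    also have "\<dots> \<le> 2 powr \<bar>b\<bar> * t powr b" using assms by (simp add: ge_one_powr_ge_zero)
    finally show ?thesis .
  qed
  then have "(\<integral>\<^sup>+y \<in> cball x (2 * t) - ball x t. ennreal (dist x y powr b) \<partial>lborel)
      \<le> (\<integral>\<^sup>+y. ennreal (2 powr \<bar>b\<bar> * t powr b) * indicator (cball x (2 * t)) y \<partial>lborel)"
    by (intro nn_integral_mono) (auto simp: indicator_def intro: ennreal_leI)
  also have "\<dots> = ennreal (2 powr \<bar>b\<bar> * t powr b) * emeasure lborel (cball x (2 * t))"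
    by (simp add: nn_integral_cmult_indicator)
  also have "\<dots> = ennreal (2 powr \<bar>b\<bar> * t powr b * (unit_ball_vol DIM('a) * (2 * t) ^ DIM('a)))"
    using assms by (simp add: emeasure_cball ennreal_mult)
  also have "\<dots> = ennreal (2 powr \<bar>b\<bar> * 2 ^ DIM('a) * unit_ball_vol DIM('a) * t powr (b + DIM('a)))"
    using assms by (simp add: powr_add powr_realpow power_mult_distrib mult_ac)
  finally show ?thesis .
qed

lemma nn_integral_dist_powr_le_suminf_annuli:
  fixes x :: "'a::euclidean_space" and \<rho> :: "nat \<Rightarrow> real" and b :: real
  assumes \<rho>_pos: "\<And>n. \<rho> n > 0"
    and covers: "\<And>y. y \<in> A \<Longrightarrow> y \<noteq> x \<Longrightarrow> \<exists>n. \<rho> n \<le> dist x y \<and> dist x y \<le> 2 * \<rho> n"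
  shows "(\<integral>\<^sup>+y \<in> A. ennreal (dist x y powr b) \<partial>lborel)
    \<le> (\<Sum>n. ennreal (2 powr \<bar>b\<bar> * 2 ^ DIM('a) * unit_ball_vol DIM('a) * \<rho> n powr (b + DIM('a))))"
proof -
  define annulus where "annulus n = cball x (2 * \<rho> n) - ball x (\<rho> n)" for n
  have "ennreal (dist x y powr b) * indicator A y
      \<le> (\<Sum>n. ennreal (dist x y powr b) * indicator (annulus n) y)" for y
  proof (cases "y \<in> A \<and> y \<noteq> x")
    case True
    then obtain n where "y \<in> annulus n"
      using covers[of y] by (auto simp: annulus_def not_less)
    then show ?thesis
      using True sum_le_suminf[OF summableI, of "{n}" "\<lambda>n. ennreal (dist x y powr b) * indicator (annulus n) y"]
      by simp
  qed auto
  then have "(\<integral>\<^sup>+y \<in> A. ennreal (dist x y powr b) \<partial>lborel)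
      \<le> (\<integral>\<^sup>+y. (\<Sum>n. ennreal (dist x y powr b) * indicator (annulus n) y) \<partial>lborel)"
    by (rule nn_integral_mono)
  also have "\<dots> = (\<Sum>n. \<integral>\<^sup>+y \<in> annulus n. ennreal (dist x y powr b) \<partial>lborel)"
    unfolding annulus_def by (rule nn_integral_suminf) (measurable; simp)
  also have "\<dots> \<le> (\<Sum>n. ennreal (2 powr \<bar>b\<bar> * 2 ^ DIM('a) * unit_ball_vol DIM('a) * \<rho> n powr (b + DIM('a))))"
    unfolding annulus_def by (intro suminf_le nn_integral_annulus_dist_powr_le \<rho>_pos) auto
  finally show ?thesis .
qed

lemma nn_integral_ball_dist_powr_le:
  fixes x :: "'a::euclidean_space" and r b :: real
  defines "e \<equiv> b + DIM('a)"
  assumes "r > 0" and "e > 0"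
  shows "(\<integral>\<^sup>+y \<in> ball x r. ennreal (dist x y powr b) \<partial>lborel)
    \<le> ennreal (2 powr \<bar>b\<bar> * 2 ^ DIM('a) * unit_ball_vol DIM('a) / (2 powr e - 1) * r powr e)"
proof -
  define A where "A = 2 powr \<bar>b\<bar> * 2 ^ DIM('a) * unit_ball_vol DIM('a)"
  define q :: real where "q = 1 / 2 powr e"
  have q: "0 < q" "q < 1"
    using assms by (auto simp: q_def)
  have "\<exists>n. r / 2 / 2 ^ n \<le> dist x y \<and> dist x y \<le> 2 * (r / 2 / 2 ^ n)"
    if "y \<in> ball x r" "y \<noteq> x" for y
  proof -
    have "0 < dist x y" "dist x y < r"
      using that by auto
    then obtain n :: nat where "2 ^ n \<le> r / dist x y" "r / dist x y < 2 ^ Suc n"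
      using ex_power_of_two_bracket[of "r / dist x y"] by auto
    then show ?thesis
      using \<open>0 < dist x y\<close> by (intro exI[of _ n]) (auto simp: field_simps)
  qed
  then have "(\<integral>\<^sup>+y \<in> ball x r. ennreal (dist x y powr b) \<partial>lborel)
      \<le> (\<Sum>n. ennreal (A * (r / 2 / 2 ^ n) powr e))"
    unfolding A_def e_def using assms by (intro nn_integral_dist_powr_le_suminf_annuli) auto
  also have "(\<lambda>n. A * (r / 2 / 2 ^ n) powr e) = (\<lambda>n. A * (r / 2) powr e * q ^ n)"
    using assms by (simp add: q_def powr_divide powr_mult power_powr power_one_over)
  also have "(\<Sum>n. ennreal (A * (r / 2) powr e * q ^ n)) = ennreal (A * (r / 2) powr e * (1 / (1 - q)))"
    using q by (intro suminf_ennreal_eq sums_mult geometric_sums) (auto simp: A_def)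
  also have "A * (r / 2) powr e * (1 / (1 - q)) = A / (2 powr e - 1) * r powr e"
    using assms by (simp add: q_def powr_divide field_simps)
  finally show ?thesis
    by (simp add: A_def)
qed

lemma nn_integral_outside_ball_dist_powr_le:
  fixes x :: "'a::euclidean_space" and r b :: real
  defines "e \<equiv> b + DIM('a)"
  assumes "r > 0" and "e < 0"
  shows "(\<integral>\<^sup>+y \<in> - ball x r. ennreal (dist x y powr b) \<partial>lborel)
    \<le> ennreal (2 powr \<bar>b\<bar> * 2 ^ DIM('a) * unit_ball_vol DIM('a) / (1 - 2 powr e) * r powr e)"
proof -
  define A where "A = 2 powr \<bar>b\<bar> * 2 ^ DIM('a) * unit_ball_vol DIM('a)"
  define q :: real where "q = 2 powr e"
  have q: "0 < q" "q < 1"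
    using assms by (auto simp: q_def powr_less_one)
  have "\<exists>n. r * 2 ^ n \<le> dist x y \<and> dist x y \<le> 2 * (r * 2 ^ n)"
    if "y \<in> - ball x r" for y
  proof -
    have "r \<le> dist x y"
      using that by auto
    then obtain n :: nat where "2 ^ n \<le> dist x y / r" "dist x y / r < 2 ^ Suc n"
      using ex_power_of_two_bracket[of "dist x y / r"] assms by auto
    then show ?thesis
      using assms by (intro exI[of _ n]) (auto simp: field_simps)
  qed
  then have "(\<integral>\<^sup>+y \<in> - ball x r. ennreal (dist x y powr b) \<partial>lborel)
      \<le> (\<Sum>n. ennreal (A * (r * 2 ^ n) powr e))"
    unfolding A_def e_def using assms by (intro nn_integral_dist_powr_le_suminf_annuli) auto
  also have "(\<lambda>n. A * (r * 2 ^ n) powr e) = (\<lambda>n. A * r powr e * q ^ n)"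
    using assms by (simp add: q_def powr_mult power_powr mult.assoc)
  also have "(\<Sum>n. ennreal (A * r powr e * q ^ n)) = ennreal (A * r powr e * (1 / (1 - q)))"
    using q by (intro suminf_ennreal_eq sums_mult geometric_sums) (auto simp: A_def)
  also have "A * r powr e * (1 / (1 - q)) = A / (1 - 2 powr e) * r powr e"
    using assms by (simp add: q_def field_simps)
  finally show ?thesis
    by (simp add: A_def)
qed

section \<open>The Gagliardo seminorm\<close>

definition gagliardo_kernel :: "real \<Rightarrow> ('a::euclidean_space \<Rightarrow> real) \<Rightarrow> 'a \<Rightarrow> 'a \<Rightarrow> real" where
  "gagliardo_kernel s w x y = (w x - w y)\<^sup>2 / norm (x - y) powr (real DIM('a) + 2 * s)"

lemma gagliardo_kernel_commute: "gagliardo_kernel s w y x = gagliardo_kernel s w x y"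
  by (simp add: gagliardo_kernel_def norm_minus_commute power2_commute)

lemma gagliardo_kernel_le_of_le:
  fixes w :: "'a::euclidean_space \<Rightarrow> real"
  assumes "0 \<le> w y" "w y \<le> w x"
  shows "gagliardo_kernel s w x y \<le> (w x)\<^sup>2 * dist x y powr (- (real DIM('a) + 2 * s))"
proof -
  have "(w x - w y)\<^sup>2 \<le> (w x)\<^sup>2"
    using assms by (intro power_mono) auto
  then show ?thesis
    unfolding gagliardo_kernel_def dist_norm powr_minus by (simp add: divide_right_mono flip: divide_inverse)
qed

lemma Hs_iff:
  "w \<in> Hs s \<longleftrightarrow> w \<in> borel_measurable lborel \<and> integrable lborel (\<lambda>x. (w x)\<^sup>2) \<and>
     (\<integral>\<^sup>+z. ennreal (gagliardo_kernel s w (fst z) (snd z)) \<partial>(lborel \<Otimes>\<^sub>M lborel)) < \<infinity>"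
  by (simp add: Hs_def gagliardo_kernel_def)

lemma gagliardo_integral_finite_if_half_bounded:
  fixes u :: "'a::euclidean_space \<Rightarrow> real" and S :: "'a set"
  assumes u_measurable [measurable]: "u \<in> borel_measurable borel"
    and S_sets: "S \<in> sets lborel" and S_finite: "emeasure lborel S < \<infinity>"
    and nonneg: "\<And>x. 0 \<le> u x" and vanishes: "\<And>x. x \<notin> S \<Longrightarrow> u x = 0"
    and half_bounded: "\<And>x. x \<in> S \<Longrightarrow>
      (\<integral>\<^sup>+y. ennreal (if u y \<le> u x then gagliardo_kernel s u x y else 0) \<partial>lborel) \<le> ennreal K"
  shows "(\<integral>\<^sup>+z. ennreal (gagliardo_kernel s u (fst z) (snd z)) \<partial>(lborel \<Otimes>\<^sub>M lborel)) < \<infinity>"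
proof -
  define H where "H x y = ennreal (if u y \<le> u x then gagliardo_kernel s u x y else 0)" for x y
  have H_measurable: "(\<lambda>z. H (fst z) (snd z)) \<in> borel_measurable (lborel \<Otimes>\<^sub>M lborel)"
    "(\<lambda>z. H (snd z) (fst z)) \<in> borel_measurable (lborel \<Otimes>\<^sub>M lborel)"
    unfolding H_def gagliardo_kernel_def by measurable
  have iterated: "(\<integral>\<^sup>+x. \<integral>\<^sup>+y. H x y \<partial>lborel \<partial>lborel) \<le> ennreal K * emeasure lborel S"
  proof -
    have "(\<integral>\<^sup>+y. H x y \<partial>lborel) \<le> ennreal K * indicator S x" for x
    proof (cases "x \<in> S")
      case False
      then have "H x y = 0" for y
        using nonneg[of y] vanishes by (auto simp: H_def gagliardo_kernel_def)
      then show ?thesis by simp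
    qed (use half_bounded in \<open>auto simp: H_def\<close>)
    then have "(\<integral>\<^sup>+x. \<integral>\<^sup>+y. H x y \<partial>lborel \<partial>lborel) \<le> (\<integral>\<^sup>+x. ennreal K * indicator S x \<partial>lborel)"
      by (rule nn_integral_mono)
    also have "\<dots> = ennreal K * emeasure lborel S"
      using S_sets by (rule nn_integral_cmult_indicator)
    finally show ?thesis .
  qed
  have "(\<integral>\<^sup>+z. ennreal (gagliardo_kernel s u (fst z) (snd z)) \<partial>(lborel \<Otimes>\<^sub>M lborel))
      \<le> (\<integral>\<^sup>+z. H (fst z) (snd z) + H (snd z) (fst z) \<partial>(lborel \<Otimes>\<^sub>M lborel))"
    by (intro nn_integral_mono) (auto simp: H_def gagliardo_kernel_commute)
  also have "\<dots> = (\<integral>\<^sup>+z. H (fst z) (snd z) \<partial>(lborel \<Otimes>\<^sub>M lborel)) + (\<integral>\<^sup>+z. H (snd z) (fst z) \<partial>(lborel \<Otimes>\<^sub>M lborel))"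
    using H_measurable by (rule nn_integral_add)
  also have "\<dots> = (\<integral>\<^sup>+x. \<integral>\<^sup>+y. H x y \<partial>lborel \<partial>lborel) + (\<integral>\<^sup>+x. \<integral>\<^sup>+y. H x y \<partial>lborel \<partial>lborel)"
    using lborel.nn_integral_fst[OF H_measurable(1)] lborel_pair.nn_integral_snd[OF H_measurable(2)]
    by simp
  also have "\<dots> \<le> ennreal K * emeasure lborel S + ennreal K * emeasure lborel S"
    by (intro add_mono iterated)
  also have "\<dots> < \<infinity>"
    using S_finite by (simp add: ennreal_mult_less_top ennreal_add_less_top)
  finally show ?thesis .
qed

section \<open>Regularized distances\<close>

lemma dist_compl_eq_0: "x \<notin> \<Omega> \<Longrightarrow> dist_compl \<Omega> x = 0"
  by (simp add: dist_compl_def)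

lemma dist_compl_le_add_dist: "dist_compl \<Omega> x \<le> dist_compl \<Omega> y + dist x y"
  unfolding dist_compl_def by (rule infdist_triangle)

lemma dist_compl_pos:
  assumes "open \<Omega>" "\<Omega> \<noteq> UNIV" "x \<in> \<Omega>"
  shows "0 < dist_compl \<Omega> x"
  unfolding dist_compl_def using assms by (intro infdist_pos_not_in_closed) auto

lemma dist_compl_bounded:
  assumes "bounded \<Omega>"
  obtains B where "\<And>x. dist_compl \<Omega> x \<le> B"
proof -
  have "\<Omega> \<noteq> UNIV"
    using assms by auto
  then obtain p where p: "p \<notin> \<Omega>"
    by blast
  obtain b where b: "b > 0" "\<And>x. x \<in> \<Omega> \<Longrightarrow> norm x \<le> b"
    using assms by (auto simp: bounded_pos)
  have "dist_compl \<Omega> x \<le> b + norm p" for x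
  proof (cases "x \<in> \<Omega>")
    case True
    have "dist_compl \<Omega> x \<le> dist x p"
      unfolding dist_compl_def using p by (intro infdist_le) auto
    also have "\<dots> \<le> b + norm p"
      using b(2)[OF True] norm_triangle_ineq4[of x p] by (simp add: dist_norm)
    finally show ?thesis .
  next
    case False
    then show ?thesis
      using b by (simp add: dist_compl_eq_0 add_nonneg_nonneg)
  qed
  then show ?thesis by (rule that)
qed

locale regularized_distance =
  fixes \<Omega> :: "'a::euclidean_space set" and \<delta> :: "'a \<Rightarrow> real" and c C L :: real
  assumes open_domain: "open \<Omega>" and bounded_domain: "bounded \<Omega>"
    and nonneg: "\<And>x. 0 \<le> \<delta> x"
    and lipschitz: "\<And>x y. x \<in> \<Omega> \<Longrightarrow> y \<in> \<Omega> \<Longrightarrow> \<bar>\<delta> x - \<delta> y\<bar> \<le> L * dist x y"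
    and c_pos: "c > 0" and C_pos: "C > 0"
    and dist_compl_lower: "\<And>x. c * \<delta> x \<le> dist_compl \<Omega> x"
    and dist_compl_upper: "\<And>x. dist_compl \<Omega> x \<le> C * \<delta> x"
begin

lemma le_dist_compl_div: "\<delta> x \<le> dist_compl \<Omega> x / c"
  using dist_compl_lower[of x] c_pos by (simp add: field_simps)

lemma dist_compl_div_le: "dist_compl \<Omega> x / C \<le> \<delta> x"
  using dist_compl_upper[of x] C_pos by (simp add: field_simps)

lemma vanishes_outside: "x \<notin> \<Omega> \<Longrightarrow> \<delta> x = 0"
  using le_dist_compl_div[of x] nonneg[of x] by (simp add: dist_compl_eq_0)

lemma domain_neq_UNIV: "\<Omega> \<noteq> UNIV"
  using bounded_domain by auto

lemma lipschitz_on_UNIV: "(max L (1 / c))-lipschitz_on UNIV \<delta>"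
proof -
  have outside: "\<bar>\<delta> x - \<delta> y\<bar> \<le> 1 / c * dist x y" if "x \<notin> \<Omega>" for x y
  proof -
    have "\<delta> y \<le> dist_compl \<Omega> y / c"
      by (rule le_dist_compl_div)
    also have "\<dots> \<le> dist x y / c"
      using dist_compl_le_add_dist[of \<Omega> y x] c_pos that
      by (intro divide_right_mono) (auto simp: dist_compl_eq_0 dist_commute)
    finally show ?thesis
      using vanishes_outside[OF that] nonneg[of y] by simp
  qed
  have "\<bar>\<delta> x - \<delta> y\<bar> \<le> max L (1 / c) * dist x y" for x y
  proof (cases "x \<in> \<Omega> \<and> y \<in> \<Omega>")
    case True
    then have "\<bar>\<delta> x - \<delta> y\<bar> \<le> L * dist x y"
      by (intro lipschitz) auto
    also have "\<dots> \<le> max L (1 / c) * dist x y"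
      by (intro mult_right_mono) auto
    finally show ?thesis .
  next
    case False
    then have "\<bar>\<delta> x - \<delta> y\<bar> \<le> 1 / c * dist x y"
      using outside[of x y] outside[of y x] by (auto simp: dist_commute abs_minus_commute)
    also have "\<dots> \<le> max L (1 / c) * dist x y"
      by (intro mult_right_mono) auto
    finally show ?thesis .
  qed
  then show ?thesis
    using c_pos by (intro lipschitz_onI) (auto simp: dist_real_def le_max_iff_disj)
qed

lemma borel_measurable [measurable]: "\<delta> \<in> borel_measurable borel"
  using lipschitz_on_UNIV by (intro borel_measurable_continuous_onI lipschitz_on_continuous_on)

lemma bounded_above:
  obtains B where "\<And>x. \<delta> x \<le> B"
proof -
  obtain B where "\<And>x. dist_compl \<Omega> x \<le> B"
    using dist_compl_bounded[OF bounded_domain] by blast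
  then have "\<delta> x \<le> B / c" for x
    using le_dist_compl_div[of x] c_pos by (meson divide_right_mono less_imp_le order_trans)
  then show ?thesis by (rule that)
qed

lemma square_integrable_powr:
  assumes "0 \<le> s"
  shows "integrable lborel (\<lambda>x. (\<delta> x powr s)\<^sup>2)"
proof -
  obtain B where B: "\<And>x. \<delta> x \<le> B"
    using bounded_above by blast
  show ?thesis
  proof (rule Bochner_Integration.integrable_bound)
    show "integrable lborel (\<lambda>x. (B powr s)\<^sup>2 * indicator \<Omega> x)"
      using open_domain emeasure_bounded_finite[OF bounded_domain]
      by (intro integrable_mult_right integrable_real_indicator) auto
    show "AE x in lborel. norm ((\<delta> x powr s)\<^sup>2) \<le> norm ((B powr s)\<^sup>2 * indicator \<Omega> x)"
    proof (intro AE_I2)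
      fix x
      have "\<delta> x powr s \<le> B powr s"
        using B nonneg assms by (intro powr_mono2) auto
      then show "norm ((\<delta> x powr s)\<^sup>2) \<le> norm ((B powr s)\<^sup>2 * indicator \<Omega> x)"
        using vanishes_outside[of x] by (cases "x \<in> \<Omega>") (auto intro!: power_mono)
    qed
  qed measurable
qed

lemma powr_diff_square_le_near:
  assumes s: "0 \<le> s" "s \<le> 1" and x: "x \<in> \<Omega>" and near: "dist x y < dist_compl \<Omega> x / 2"
  shows "(\<delta> x powr s - \<delta> y powr s)\<^sup>2
    \<le> L\<^sup>2 * (dist_compl \<Omega> x / (2 * C)) powr (2 * s - 2) * (dist x y)\<^sup>2"
proof -
  define m where "m = dist_compl \<Omega> x / (2 * C)"
  have dx: "0 < dist_compl \<Omega> x"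
    using dist_compl_pos[OF open_domain domain_neq_UNIV x] .
  then have m: "0 < m"
    using C_pos by (simp add: m_def)
  have "m \<le> dist_compl \<Omega> x / C"
    using dx C_pos by (simp add: m_def field_simps)
  then have mx: "m \<le> \<delta> x"
    using dist_compl_div_le[of x] by linarith
  have dy: "dist_compl \<Omega> x / 2 < dist_compl \<Omega> y"
    using dist_compl_le_add_dist[of \<Omega> x y] near by linarith
  then have "m \<le> dist_compl \<Omega> y / C"
    using C_pos by (simp add: m_def field_simps)
  then have my: "m \<le> \<delta> y"
    using dist_compl_div_le[of y] by linarith
  have y: "y \<in> \<Omega>"
    using dy dx dist_compl_eq_0[of y \<Omega>] by fastforce
  have "\<bar>\<delta> x powr s - \<delta> y powr s\<bar> \<le> \<bar>\<delta> x - \<delta> y\<bar> * m powr (s - 1)"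
    by (rule abs_powr_diff_le[OF m mx my s])
  also have "\<dots> \<le> L * dist x y * m powr (s - 1)"
    by (intro mult_right_mono lipschitz x y) simp
  finally have "(\<delta> x powr s - \<delta> y powr s)\<^sup>2 \<le> (L * dist x y * m powr (s - 1))\<^sup>2"
    by (metis abs_ge_zero order_trans power2_abs power_mono)
  also have "\<dots> = L\<^sup>2 * m powr (2 * s - 2) * (dist x y)\<^sup>2"
    using m powr_power[of m "s - 1" 2] by (simp add: power_mult_distrib algebra_simps)
  finally show ?thesis
    by (simp add: m_def)
qed

lemma gagliardo_kernel_le_near:
  assumes "0 \<le> s" "s \<le> 1" "x \<in> \<Omega>" "dist x y < dist_compl \<Omega> x / 2"
  shows "gagliardo_kernel s (\<lambda>x. \<delta> x powr s) x y
    \<le> L\<^sup>2 * (dist_compl \<Omega> x / (2 * C)) powr (2 * s - 2) * dist x y powr (2 - (real DIM('a) + 2 * s))"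
proof (cases "y = x")
  case False
  define A where "A = L\<^sup>2 * (dist_compl \<Omega> x / (2 * C)) powr (2 * s - 2)"
  have "gagliardo_kernel s (\<lambda>x. \<delta> x powr s) x y \<le> A * (dist x y)\<^sup>2 / dist x y powr (DIM('a) + 2 * s)"
    using powr_diff_square_le_near[OF assms]
    unfolding gagliardo_kernel_def dist_norm A_def by (simp add: divide_right_mono)
  also have "\<dots> = A * (dist x y powr 2 / dist x y powr (DIM('a) + 2 * s))"
    by simp
  also have "\<dots> = A * dist x y powr (2 - (real DIM('a) + 2 * s))"
    by (simp add: powr_diff)
  finally show ?thesis
    by (simp add: A_def)
qed (simp add: gagliardo_kernel_def)

lemma gagliardo_integral_near_bounded:
  assumes s: "0 < s" "s < 1"
  shows "\<exists>K\<ge>0. \<forall>x\<in>\<Omega>. (\<integral>\<^sup>+y \<in> ball x (dist_compl \<Omega> x / 2).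
    ennreal (gagliardo_kernel s (\<lambda>x. \<delta> x powr s) x y) \<partial>lborel) \<le> ennreal K"
proof -
  define b where "b = 2 - (real DIM('a) + 2 * s)"
  define K where "K = 2 powr \<bar>b\<bar> * 2 ^ DIM('a) * unit_ball_vol DIM('a) / (2 powr (b + DIM('a)) - 1)"
  have b: "b + DIM('a) = 2 - 2 * s"
    by (simp add: b_def)
  have "1 < (2::real) powr (2 - 2 * s)"
    using s by (intro gr_one_powr) auto
  then have K: "K \<ge> 0"
    by (simp add: K_def b)
  have "(\<integral>\<^sup>+y \<in> ball x (dist_compl \<Omega> x / 2). ennreal (gagliardo_kernel s (\<lambda>x. \<delta> x powr s) x y) \<partial>lborel)
      \<le> ennreal (L\<^sup>2 * C powr (2 - 2 * s) * K)" if x: "x \<in> \<Omega>" for x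
  proof -
    define r where "r = dist_compl \<Omega> x / 2"
    define A where "A = L\<^sup>2 * (r / C) powr (2 * s - 2)"
    have r: "r > 0"
      using dist_compl_pos[OF open_domain domain_neq_UNIV x] by (simp add: r_def)
    have "(\<integral>\<^sup>+y \<in> ball x r. ennreal (gagliardo_kernel s (\<lambda>x. \<delta> x powr s) x y) \<partial>lborel)
        \<le> ennreal A * (\<integral>\<^sup>+y \<in> ball x r. ennreal (dist x y powr b) \<partial>lborel)"
      using gagliardo_kernel_le_near[of s x] s x
      by (intro set_nn_integral_le_cmult) (auto simp: A_def r_def b_def)
    also have "\<dots> \<le> ennreal A * ennreal (K * r powr (2 - 2 * s))"
      using nn_integral_ball_dist_powr_le[of r b x] r s b
      by (intro mult_left_mono) (simp_all add: K_def)
    also have "\<dots> = ennreal (A * (K * r powr (2 - 2 * s)))"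
      by (simp add: A_def ennreal_mult')
    also have "A * (K * r powr (2 - 2 * s)) = L\<^sup>2 * ((r / C) powr (2 * s - 2) * r powr (2 - 2 * s)) * K"
      by (simp add: A_def)
    also have "(r / C) powr (2 * s - 2) * r powr (2 - 2 * s) = C powr (2 - 2 * s)"
      using r C_pos by (simp add: powr_divide powr_diff)
    finally show ?thesis
      by (simp add: r_def)
  qed
  then show ?thesis
    using K by (intro exI[of _ "L\<^sup>2 * C powr (2 - 2 * s) * K"]) auto
qed

lemma powr_square_mult_dist_compl_le:
  assumes "0 \<le> s" "x \<in> \<Omega>"
  shows "(\<delta> x powr s)\<^sup>2 * (dist_compl \<Omega> x / 2) powr (- (2 * s)) \<le> ((2 / c) powr s)\<^sup>2"
proof -
  define r where "r = dist_compl \<Omega> x / 2"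
  have r: "r > 0"
    using dist_compl_pos[OF open_domain domain_neq_UNIV assms(2)] by (simp add: r_def)
  have "r powr (2 * s) = (r powr s)\<^sup>2"
    using r by (simp add: powr_power)
  then have "(\<delta> x powr s)\<^sup>2 * r powr (- (2 * s)) = ((\<delta> x / r) powr s)\<^sup>2"
    using r nonneg[of x] by (simp add: powr_minus powr_divide power_divide field_simps)
  also have "\<dots> \<le> ((2 / c) powr s)\<^sup>2"
  proof -
    have "\<delta> x / r \<le> 2 / c"
      using le_dist_compl_div[of x] r c_pos by (simp add: r_def field_simps)
    then show ?thesis
      using r nonneg[of x] assms by (intro power_mono powr_mono2) auto
  qed
  finally show ?thesis
    by (simp add: r_def)
qed

lemma gagliardo_integral_far_bounded:
  assumes s: "0 < s"
  shows "\<exists>K\<ge>0. \<forall>x\<in>\<Omega>. (\<integral>\<^sup>+y \<in> - ball x (dist_compl \<Omega> x / 2).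
    ennreal (if \<delta> y powr s \<le> \<delta> x powr s then gagliardo_kernel s (\<lambda>x. \<delta> x powr s) x y else 0) \<partial>lborel)
    \<le> ennreal K"
proof -
  define b where "b = - (real DIM('a) + 2 * s)"
  define K where "K = 2 powr \<bar>b\<bar> * 2 ^ DIM('a) * unit_ball_vol DIM('a) / (1 - 2 powr (b + DIM('a)))"
  have b: "b + DIM('a) = - (2 * s)"
    by (simp add: b_def)
  have "(2::real) powr (- (2 * s)) < 1"
    using s by (intro powr_less_one) auto
  then have K: "K \<ge> 0"
    by (simp add: K_def b)
  have "(\<integral>\<^sup>+y \<in> - ball x (dist_compl \<Omega> x / 2).
      ennreal (if \<delta> y powr s \<le> \<delta> x powr s then gagliardo_kernel s (\<lambda>x. \<delta> x powr s) x y else 0) \<partial>lborel)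
      \<le> ennreal (((2 / c) powr s)\<^sup>2 * K)" if x: "x \<in> \<Omega>" for x
  proof -
    define r where "r = dist_compl \<Omega> x / 2"
    define A where "A = (\<delta> x powr s)\<^sup>2"
    have r: "r > 0"
      using dist_compl_pos[OF open_domain domain_neq_UNIV x] by (simp add: r_def)
    have "(\<integral>\<^sup>+y \<in> - ball x r.
        ennreal (if \<delta> y powr s \<le> \<delta> x powr s then gagliardo_kernel s (\<lambda>x. \<delta> x powr s) x y else 0) \<partial>lborel)
        \<le> ennreal A * (\<integral>\<^sup>+y \<in> - ball x r. ennreal (dist x y powr b) \<partial>lborel)"
      using gagliardo_kernel_le_of_le[of "\<lambda>x. \<delta> x powr s" _ x s]
      by (intro set_nn_integral_le_cmult) (auto simp: A_def b_def)
    also have "\<dots> \<le> ennreal A * ennreal (K * r powr (- (2 * s)))"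
      using nn_integral_outside_ball_dist_powr_le[of r b x] r s b
      by (intro mult_left_mono) (simp_all add: K_def)
    also have "\<dots> = ennreal (A * r powr (- (2 * s)) * K)"
      by (simp add: A_def ennreal_mult'[symmetric] mult_ac)
    also have "A * r powr (- (2 * s)) \<le> ((2 / c) powr s)\<^sup>2"
      using powr_square_mult_dist_compl_le[of s x] s x by (simp add: A_def r_def)
    finally show ?thesis
      using K by (simp add: r_def ennreal_leI mult_right_mono)
  qed
  then show ?thesis
    using K by (intro exI[of _ "((2 / c) powr s)\<^sup>2 * K"]) auto
qed

lemma gagliardo_integral_half_bounded:
  assumes s: "0 < s" "s < 1"
  shows "\<exists>K. \<forall>x\<in>\<Omega>. (\<integral>\<^sup>+y.
    ennreal (if \<delta> y powr s \<le> \<delta> x powr s then gagliardo_kernel s (\<lambda>x. \<delta> x powr s) x y else 0) \<partial>lborel)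
    \<le> ennreal K"
proof -
  obtain K1 where K1: "K1 \<ge> 0" "\<forall>x\<in>\<Omega>. (\<integral>\<^sup>+y \<in> ball x (dist_compl \<Omega> x / 2).
    ennreal (gagliardo_kernel s (\<lambda>x. \<delta> x powr s) x y) \<partial>lborel) \<le> ennreal K1"
    using gagliardo_integral_near_bounded[OF s] by blast
  obtain K2 where K2: "K2 \<ge> 0" "\<forall>x\<in>\<Omega>. (\<integral>\<^sup>+y \<in> - ball x (dist_compl \<Omega> x / 2).
    ennreal (if \<delta> y powr s \<le> \<delta> x powr s then gagliardo_kernel s (\<lambda>x. \<delta> x powr s) x y else 0) \<partial>lborel)
    \<le> ennreal K2"
    using gagliardo_integral_far_bounded[OF s(1)] by blast
  have "(\<integral>\<^sup>+y. ennreal (if \<delta> y powr s \<le> \<delta> x powr s then gagliardo_kernel s (\<lambda>x. \<delta> x powr s) x y else 0) \<partial>lborel)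
      \<le> ennreal (K1 + K2)" if x: "x \<in> \<Omega>" for x
  proof -
    define r where "r = dist_compl \<Omega> x / 2"
    define F where "F y = ennreal (if \<delta> y powr s \<le> \<delta> x powr s then gagliardo_kernel s (\<lambda>x. \<delta> x powr s) x y else 0)" for y
    have F_measurable [measurable]: "F \<in> borel_measurable lborel"
      unfolding F_def gagliardo_kernel_def by measurable
    have "(\<integral>\<^sup>+y. F y \<partial>lborel) = (\<integral>\<^sup>+y. F y * indicator (ball x r) y + F y * indicator (- ball x r) y \<partial>lborel)"
      by (intro nn_integral_cong) (simp split: split_indicator)
    also have "\<dots> = (\<integral>\<^sup>+y \<in> ball x r. F y \<partial>lborel) + (\<integral>\<^sup>+y \<in> - ball x r. F y \<partial>lborel)"
      by (rule nn_integral_add) (measurable; simp)+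
    also have "(\<integral>\<^sup>+y \<in> ball x r. F y \<partial>lborel)
        \<le> (\<integral>\<^sup>+y \<in> ball x r. ennreal (gagliardo_kernel s (\<lambda>x. \<delta> x powr s) x y) \<partial>lborel)"
      by (intro nn_integral_mono) (auto simp: F_def gagliardo_kernel_def split: split_indicator)
    finally show ?thesis
      using K1 K2 x by (simp add: F_def r_def ennreal_plus add_mono order_trans)
  qed
  then show ?thesis
    by blast
qed

lemma powr_in_Hs:
  assumes s: "0 < s" "s < 1"
  shows "(\<lambda>x. \<delta> x powr s) \<in> Hs s"
proof -
  obtain K where "\<forall>x\<in>\<Omega>. (\<integral>\<^sup>+y.
    ennreal (if \<delta> y powr s \<le> \<delta> x powr s then gagliardo_kernel s (\<lambda>x. \<delta> x powr s) x y else 0) \<partial>lborel)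
    \<le> ennreal K"
    using gagliardo_integral_half_bounded[OF s] by blast
  then have "(\<integral>\<^sup>+z. ennreal (gagliardo_kernel s (\<lambda>x. \<delta> x powr s) (fst z) (snd z)) \<partial>(lborel \<Otimes>\<^sub>M lborel)) < \<infinity>"
    using open_domain emeasure_bounded_finite[OF bounded_domain] vanishes_outside
    by (intro gagliardo_integral_finite_if_half_bounded[where S = \<Omega>]) auto
  then show ?thesis
    using square_integrable_powr s by (simp add: Hs_iff)
qed

end

theorem lemma2p1:
  fixes \<Omega> :: "'a::euclidean_space set" and \<delta> :: "'a \<Rightarrow> real" and c C :: real
  assumes "open \<Omega>" and "bounded \<Omega>" and "C11_boundary \<Omega>"
    and "\<forall>x. \<delta> x \<ge> 0"
    and "\<exists>L. \<forall>x\<in>closure \<Omega>. \<forall>y\<in>closure \<Omega>. \<bar>\<delta> x - \<delta> y\<bar> \<le> L * dist x y"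
    and "c > 0" and "C > 0"
    and "\<forall>x. c * \<delta> x \<le> dist_compl \<Omega> x \<and> dist_compl \<Omega> x \<le> C * \<delta> x"
  shows "\<forall>s. 0 < s \<and> s < 1 \<longrightarrow> (\<lambda>x. \<delta> x powr s) \<in> Hs s"
proof -
  obtain L where "\<forall>x\<in>closure \<Omega>. \<forall>y\<in>closure \<Omega>. \<bar>\<delta> x - \<delta> y\<bar> \<le> L * dist x y"
    using assms(5) by blast
  then interpret regularized_distance \<Omega> \<delta> c C L
    using assms by unfold_locales (auto simp: closure_subset[THEN subsetD])
  show ?thesis
    using powr_in_Hs by blast
qed

end
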